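(* Let $a,b,g,h>0$ and fix real numbers $x,y$. Consider all pairs $(\theta,\psi)\in\mathbb{R}^2$ such that, with $A=(a\,\mathrm{ch}\,\theta,a\,\mathrm{sh}\,\theta)$ and $B=(g+b\,\mathrm{ch}\,\psi,b\,\mathrm{sh}\,\psi)$, the vector $B-A$ is future-pointing spacelike with $\langle B-A,B-A\rangle=h^2$; for such a pair write $B-A=h(\mathrm{ch}\,\alpha,\mathrm{sh}\,\alpha)$ with $\alpha\in\mathbb{R}$ and define the coupler point $$X(\theta,\psi)=A+x(\mathrm{ch}\,\alpha,\mathrm{sh}\,\alpha)+y(\mathrm{sh}\,\alpha,\mathrm{ch}\,\alpha).$$ Then the coupler curve $\{X(\theta,\psi)\}$ is algebraic of degree six: there is a nonzero real polynomial $P(X,Y)$ of total degree $6$ vanishing at every coupler point.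
   Context: $\mathbb{R}^2$ carries the Lorentzian form $\langle u,v\rangle=u_1v_1-u_2v_2$; a vector $u$ is future-pointing spacelike if $u_1>|u_2|$. $\mathrm{ch},\mathrm{sh}$ are hyperbolic cosine and sine. This is a Minkowskian planar 4R linkage with fixed pivots $O=(0,0)$, $C=(g,0)$, input crank $OA$ of length $a$, output crank $CB$ of length $b$, coupler $AB$ of length $h$; $(x,y)$ are the coordinates of a point rigidly attached to the coupler in the moving Minkowskian frame located at $A$ with first axis along $AB$. *)

theory Defs
  imports Complex_Main
begin

definition lor :: "real \<times> real \<Rightarrow> real \<times> real \<Rightarrow> real" where
  "lor u v = fst u * fst v - snd u * snd v"

definition fut_spacelike :: "real \<times> real \<Rightarrow> bool" where
  "fut_spacelike u \<longleftrightarrow> fst u > \<bar>snd u\<bar>"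

text \<open>A bivariate real polynomial is represented by its coefficient function
  c i j (coefficient of X^i Y^j).\<close>
definition poly2_total_degree :: "(nat \<Rightarrow> nat \<Rightarrow> real) \<Rightarrow> nat \<Rightarrow> bool" where
  "poly2_total_degree c d \<longleftrightarrow>
     (\<forall>i j. d < i + j \<longrightarrow> c i j = 0) \<and> (\<exists>i j. i + j = d \<and> c i j \<noteq> 0)"

definition poly2_eval :: "nat \<Rightarrow> (nat \<Rightarrow> nat \<Rightarrow> real) \<Rightarrow> real \<Rightarrow> real \<Rightarrow> real" where
  "poly2_eval d c X Y = (\<Sum>i\<le>d. \<Sum>j\<le>d. c i j * X ^ i * Y ^ j)"

definition vsub :: "real \<times> real \<Rightarrow> real \<times> real \<Rightarrow> real \<times> real" where
  "vsub u v = (fst u - fst v, snd u - snd v)"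

definition pA :: "real \<Rightarrow> real \<Rightarrow> real \<times> real" where
  "pA a \<theta> = (a * cosh \<theta>, a * sinh \<theta>)"

definition pB :: "real \<Rightarrow> real \<Rightarrow> real \<Rightarrow> real \<times> real" where
  "pB g b \<psi> = (g + b * cosh \<psi>, b * sinh \<psi>)"

definition coupler_pt :: "real \<Rightarrow> real \<Rightarrow> real \<Rightarrow> real \<Rightarrow> real \<Rightarrow> real \<times> real" where
  "coupler_pt a \<theta> \<alpha> x y =
     (a * cosh \<theta> + x * cosh \<alpha> + y * sinh \<alpha>, a * sinh \<theta> + x * sinh \<alpha> + y * cosh \<alpha>)"

end

theory Submission
  imports Defs
begin

text \<open>Write the coupler point as X = A + x e + y f with the Lorentz-orthonormal frame
  e = (ch \<alpha>, sh \<alpha>), f = (sh \<alpha>, ch \<alpha>). Then A = X - x e - y f lies on the hyperbola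
  \<langle>A, A\<rangle> = a^2 and B = X - (x - h) e - y f on \<langle>B - C, B - C\<rangle> = b^2. Since \<langle>e, e\<rangle> = 1,
  \<langle>f, f\<rangle> = -1 and \<langle>e, f\<rangle> = 0, each condition is linear in (ch \<alpha>, sh \<alpha>) with
  coefficients of degree at most two in X, Y. Solving the two linear equations by Cramer's
  rule and substituting into ch^2 \<alpha> - sh^2 \<alpha> = 1 eliminates \<alpha> and leaves a sextic in X, Y
  whose X^6 coefficient is -4h^2.\<close>

definition frame_vec :: "real \<Rightarrow> real \<Rightarrow> real \<Rightarrow> real \<Rightarrow> real \<times> real" where
  "frame_vec x y c s = (x * c + y * s, x * s + y * c)"

lemma lor_sub_frame_vec_linear:
  assumes "c\<^sup>2 - s\<^sup>2 = 1"
    and "lor (vsub u (frame_vec x y c s)) (vsub u (frame_vec x y c s)) = \<rho>"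
  shows "(2*y*snd u - 2*x*fst u) * c + (2*x*snd u - 2*y*fst u) * s
           = \<rho> - lor u u - x\<^sup>2 + y\<^sup>2"
proof -
  have "lor (vsub u (frame_vec x y c s)) (vsub u (frame_vec x y c s))
      = lor u u + (2*y*snd u - 2*x*fst u) * c + (2*x*snd u - 2*y*fst u) * s
        + (x\<^sup>2 - y\<^sup>2) * (c\<^sup>2 - s\<^sup>2)"
    by (simp add: lor_def vsub_def frame_vec_def power2_eq_square algebra_simps)
  with assms show ?thesis
    by simp
qed

definition hyp_resultant :: "real \<Rightarrow> real \<Rightarrow> real \<Rightarrow> real \<Rightarrow> real \<Rightarrow> real \<Rightarrow> real" where
  "hyp_resultant p1 q1 r1 p2 q2 r2 =
     (r1*q2 - r2*q1)\<^sup>2 - (p1*r2 - p2*r1)\<^sup>2 - (p1*q2 - p2*q1)\<^sup>2"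

lemma hyp_resultant_eq_0:
  assumes "p1*c + q1*s = r1" "p2*c + q2*s = r2" "c\<^sup>2 - s\<^sup>2 = 1"
  shows "hyp_resultant p1 q1 r1 p2 q2 r2 = 0"
proof -
  have cramer_c: "r1*q2 - r2*q1 = (p1*q2 - p2*q1) * c"
    and cramer_s: "p1*r2 - p2*r1 = (p1*q2 - p2*q1) * s"
    by (simp_all add: algebra_simps flip: assms(1,2))
  have "hyp_resultant p1 q1 r1 p2 q2 r2 = (p1*q2 - p2*q1)\<^sup>2 * (c\<^sup>2 - s\<^sup>2 - 1)"
    unfolding hyp_resultant_def cramer_c cramer_s by (simp add: algebra_simps power2_eq_square)
  with assms(3) show ?thesis
    by simp
qed

definition coupler_poly :: "real \<Rightarrow> real \<Rightarrow> real \<Rightarrow> real \<Rightarrow> real \<Rightarrow> real \<Rightarrow> real \<Rightarrow> real \<Rightarrow> real" where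
  "coupler_poly a b g h x y X Y =
     hyp_resultant
       (2*y*Y - 2*x*X) (2*x*Y - 2*y*X) (a\<^sup>2 - (X\<^sup>2 - Y\<^sup>2) - x\<^sup>2 + y\<^sup>2)
       (2*y*Y - 2*(x - h)*(X - g)) (2*(x - h)*Y - 2*y*(X - g))
       (b\<^sup>2 - ((X - g)\<^sup>2 - Y\<^sup>2) - (x - h)\<^sup>2 + y\<^sup>2)"

lemma coupler_poly_coupler_pt_eq_0:
  assumes "vsub (pB g b \<psi>) (pA a \<theta>) = (h * cosh \<alpha>, h * sinh \<alpha>)"
  shows "coupler_poly a b g h x y (fst (coupler_pt a \<theta> \<alpha> x y)) (snd (coupler_pt a \<theta> \<alpha> x y)) = 0"
proof -
  define X where "X = fst (coupler_pt a \<theta> \<alpha> x y)"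
  define Y where "Y = snd (coupler_pt a \<theta> \<alpha> x y)"
  have cosh_sinh_sq: "(cosh t)\<^sup>2 - (sinh t)\<^sup>2 = 1" for t :: real
    by (simp add: cosh_square_eq)
  have "pA a \<theta> = vsub (X, Y) (frame_vec x y (cosh \<alpha>) (sinh \<alpha>))"
    by (simp add: X_def Y_def coupler_pt_def pA_def vsub_def frame_vec_def)
  moreover have "lor (pA a \<theta>) (pA a \<theta>) = a\<^sup>2"
    using cosh_sinh_sq[of \<theta>] by (simp add: lor_def pA_def algebra_simps power2_eq_square)
  ultimately have A_eq: "(2*y*Y - 2*x*X) * cosh \<alpha> + (2*x*Y - 2*y*X) * sinh \<alpha>
      = a\<^sup>2 - (X\<^sup>2 - Y\<^sup>2) - x\<^sup>2 + y\<^sup>2"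
    using lor_sub_frame_vec_linear[OF cosh_sinh_sq] by (fastforce simp: lor_def power2_eq_square)
  have "vsub (pB g b \<psi>) (g, 0) = vsub (X - g, Y) (frame_vec (x - h) y (cosh \<alpha>) (sinh \<alpha>))"
    using assms by (simp add: X_def Y_def coupler_pt_def pA_def pB_def vsub_def frame_vec_def
        algebra_simps prod_eq_iff)
  moreover have "lor (vsub (pB g b \<psi>) (g, 0)) (vsub (pB g b \<psi>) (g, 0)) = b\<^sup>2"
    using cosh_sinh_sq[of \<psi>] by (simp add: lor_def pB_def vsub_def algebra_simps power2_eq_square)
  ultimately have B_eq: "(2*y*Y - 2*(x - h)*(X - g)) * cosh \<alpha> + (2*(x - h)*Y - 2*y*(X - g)) * sinh \<alpha>
      = b\<^sup>2 - ((X - g)\<^sup>2 - Y\<^sup>2) - (x - h)\<^sup>2 + y\<^sup>2"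
    using lor_sub_frame_vec_linear[OF cosh_sinh_sq] by (fastforce simp: lor_def power2_eq_square)
  show ?thesis
    unfolding X_def[symmetric] Y_def[symmetric] coupler_poly_def
    by (rule hyp_resultant_eq_0[OF A_eq B_eq cosh_sinh_sq])
qed

definition coupler_coeff :: "real \<Rightarrow> real \<Rightarrow> real \<Rightarrow> real \<Rightarrow> real \<Rightarrow> real \<Rightarrow> nat \<Rightarrow> nat \<Rightarrow> real" where
 "coupler_coeff a b g h x y i j = (
  if i = 0 \<and> j = 0 then (4*g^2*y^6) + (-12*g^2*x^2*y^4) + (12*g^2*x^4*y^2) + (-4*g^2*x^6) + (8*g^2*h*x*y^4) + (-16*g^2*h*x^3*y^2) + (8*g^2*h*x^5) + (-4*g^2*h^2*y^4) + (8*g^2*h^2*x^2*y^2) + (-4*g^2*h^2*x^4) + (8*a^2*g^2*y^4) + (-16*a^2*g^2*x^2*y^2) + (8*a^2*g^2*x^4) + (16*a^2*g^2*h*x*y^2) + (-16*a^2*g^2*h*x^3) + (-8*a^2*g^2*h^2*y^2) + (8*a^2*g^2*h^2*x^2) + (4*a^4*g^2*y^2) + (-4*a^4*g^2*x^2) + (8*a^4*g^2*h*x) + (-4*a^4*g^2*h^2) else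
  if i = 0 \<and> j = 1 then (-8*g*h*y^5) + (16*g*h*x^2*y^3) + (-8*g*h*x^4*y) + (-16*g*h^2*x*y^3) + (16*g*h^2*x^3*y) + (8*g*h^3*y^3) + (-8*g*h^3*x^2*y) + (8*g^3*h*y^3) + (-8*g^3*h*x^2*y) + (-8*b^2*g*h*y^3) + (8*b^2*g*h*x^2*y) + (-8*a^2*g*h*y^3) + (8*a^2*g*h*x^2*y) + (-16*a^2*g*h^2*x*y) + (8*a^2*g*h^3*y) + (8*a^2*g^3*h*y) + (-8*a^2*b^2*g*h*y) else
  if i = 0 \<and> j = 2 then (4*h^2*y^4) + (-8*h^2*x^2*y^2) + (4*h^2*x^4) + (8*h^3*x*y^2) + (-8*h^3*x^3) + (-4*h^4*y^2) + (4*h^4*x^2) + (-8*g^2*y^4) + (16*g^2*x^2*y^2) + (-8*g^2*x^4) + (-8*g^2*h*x*y^2) + (8*g^2*h*x^3) + (-16*g^2*h^2*y^2) + (-4*g^4*y^2) + (4*g^4*x^2) + (-8*b^2*h*x*y^2) + (8*b^2*h*x^3) + (8*b^2*h^2*y^2) + (-8*b^2*h^2*x^2) + (8*b^2*g^2*y^2) + (-8*b^2*g^2*x^2) + (-4*b^4*y^2) + (4*b^4*x^2) + (8*a^2*h*x*y^2) + (-8*a^2*h*x^3) + (16*a^2*h^2*x^2) + (-8*a^2*h^3*x) + (8*a^2*g^2*h*x) + (-8*a^2*g^2*h^2) + (8*a^2*b^2*y^2) + (-8*a^2*b^2*x^2) + (8*a^2*b^2*h*x) + (-4*a^4*y^2)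 + (4*a^4*x^2) + (-8*a^4*h*x) + (4*a^4*h^2) else
  if i = 0 \<and> j = 3 then (16*g*h*y^3) + (-16*g*h*x^2*y) + (16*g*h^2*x*y) + (8*g*h^3*y) + (8*g^3*h*y) + (-8*b^2*g*h*y) + (-8*a^2*g*h*y) else
  if i = 0 \<and> j = 4 then (-8*h^2*y^2) + (8*h^2*x^2) + (-8*h^3*x) + (4*g^2*y^2) + (-4*g^2*x^2) + (-4*g^2*h^2) + (8*b^2*h*x) + (-8*a^2*h*x) + (8*a^2*h^2) else
  if i = 0 \<and> j = 5 then (-8*g*h*y) else
  if i = 0 \<and> j = 6 then (4*h^2) else
  if i = 1 \<and> j = 0 then (8*g*h*x*y^4) + (-16*g*h*x^3*y^2) + (8*g*h*x^5) + (16*g*h^2*x^2*y^2) + (-16*g*h^2*x^4) + (-8*g*h^3*x*y^2) + (8*g*h^3*x^3) + (-8*g^3*y^4) + (16*g^3*x^2*y^2) + (-8*g^3*x^4) + (-8*g^3*h*x*y^2) + (8*g^3*h*x^3) + (8*b^2*g*y^4) + (-16*b^2*g*x^2*y^2) + (8*b^2*g*x^4) + (8*b^2*g*h*x*y^2) + (-8*b^2*g*h*x^3) + (-8*a^2*g*y^4) + (16*a^2*g*x^2*y^2) + (-8*a^2*g*x^4) + (-8*a^2*g*h*x*y^2) + (8*a^2*g*h*x^3) + (8*a^2*g*h^2*y^2) + (8*a^2*g*h^2*x^2) + (-8*a^2*g*h^3*x) + (-8*a^2*g^3*y^2) + (8*a^2*g^3*x^2) + (-8*a^2*g^3*h*x)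 + (8*a^2*b^2*g*y^2) + (-8*a^2*b^2*g*x^2) + (8*a^2*b^2*g*h*x) + (-8*a^4*g*y^2) + (8*a^4*g*x^2) + (-16*a^4*g*h*x) + (8*a^4*g*h^2) else
  if i = 1 \<and> j = 1 then (16*g^2*h*y^3) + (-16*g^2*h*x^2*y) + (32*g^2*h^2*x*y) + (-16*a^2*g^2*h*y) else
  if i = 1 \<and> j = 2 then (-16*g*h*x*y^2) + (16*g*h*x^3) + (-8*g*h^2*y^2) + (-8*g*h^2*x^2) + (-8*g*h^3*x) + (8*g^3*y^2) + (-8*g^3*x^2) + (-8*g^3*h*x) + (-8*b^2*g*y^2) + (8*b^2*g*x^2) + (8*b^2*g*h*x) + (8*a^2*g*y^2) + (-8*a^2*g*x^2) + (-8*a^2*g*h*x) + (16*a^2*g*h^2) else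
  if i = 1 \<and> j = 3 then (-16*g^2*h*y) else
  if i = 1 \<and> j = 4 then (8*g*h*x) + (8*g*h^2) else
  if i = 2 \<and> j = 0 then (-4*h^2*y^4) + (8*h^2*x^2*y^2) + (-4*h^2*x^4) + (-8*h^3*x*y^2) + (8*h^3*x^3) + (4*h^4*y^2) + (-4*h^4*x^2) + (8*g^2*y^4) + (-16*g^2*x^2*y^2) + (8*g^2*x^4) + (-8*g^2*h*x*y^2) + (8*g^2*h*x^3) + (-16*g^2*h^2*x^2) + (4*g^4*y^2) + (-4*g^4*x^2) + (8*b^2*h*x*y^2) + (-8*b^2*h*x^3) + (-8*b^2*h^2*y^2) + (8*b^2*h^2*x^2) + (-8*b^2*g^2*y^2) + (8*b^2*g^2*x^2) + (4*b^4*y^2) + (-4*b^4*x^2) + (-8*a^2*h*x*y^2) + (8*a^2*h*x^3) + (-16*a^2*h^2*x^2) + (8*a^2*h^3*x) + (16*a^2*g^2*y^2) + (-16*a^2*g^2*x^2) + (8*a^2*g^2*h*x) + (8*a^2*g^2*h^2) + (-8*a^2*b^2*y^2) + (8*a^2*b^2*x^2) + (-8*a^2*b^2*h*x) + (4*a^4*y^2) + (-4*a^4*x^2) + (8*a^4*h*x) + (-4*a^4*h^2) else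
  if i = 2 \<and> j = 1 then (-16*g*h*y^3) + (16*g*h*x^2*y) + (-16*g*h^2*x*y) + (-8*g*h^3*y) + (-8*g^3*h*y) + (8*b^2*g*h*y) + (8*a^2*g*h*y) else
  if i = 2 \<and> j = 2 then (16*h^2*y^2) + (-16*h^2*x^2) + (16*h^3*x) + (-8*g^2*y^2) + (8*g^2*x^2) + (16*g^2*h*x) + (8*g^2*h^2) + (-16*b^2*h*x) + (16*a^2*h*x) + (-16*a^2*h^2) else
  if i = 2 \<and> j = 3 then (16*g*h*y) else
  if i = 2 \<and> j = 4 then (-12*h^2) else
  if i = 3 \<and> j = 0 then (16*g*h*x*y^2) + (-16*g*h*x^3) + (8*g*h^2*y^2) + (8*g*h^2*x^2) + (8*g*h^3*x) + (-8*g^3*y^2) + (8*g^3*x^2) + (8*g^3*h*x) + (8*b^2*g*y^2) + (-8*b^2*g*x^2) + (-8*b^2*g*h*x) + (-8*a^2*g*y^2) + (8*a^2*g*x^2) + (8*a^2*g*h*x) + (-16*a^2*g*h^2) else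
  if i = 3 \<and> j = 1 then (16*g^2*h*y) else
  if i = 3 \<and> j = 2 then (-16*g*h*x) + (-16*g*h^2) else
  if i = 4 \<and> j = 0 then (-8*h^2*y^2) + (8*h^2*x^2) + (-8*h^3*x) + (4*g^2*y^2) + (-4*g^2*x^2) + (-16*g^2*h*x) + (-4*g^2*h^2) + (8*b^2*h*x) + (-8*a^2*h*x) + (8*a^2*h^2) else
  if i = 4 \<and> j = 1 then (-8*g*h*y) else
  if i = 4 \<and> j = 2 then (12*h^2) else
  if i = 5 \<and> j = 0 then (8*g*h*x) + (8*g*h^2) else
  if i = 6 \<and> j = 0 then (-4*h^2) else
  0)"

lemma poly2_eval_coupler_coeff:
  "poly2_eval 6 (coupler_coeff a b g h x y) X Y = coupler_poly a b g h x y X Y"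
  unfolding poly2_eval_def coupler_poly_def hyp_resultant_def
  by (simp add: numeral_eq_Suc coupler_coeff_def; algebra)

lemma poly2_total_degree_coupler_coeff:
  assumes "h \<noteq> 0"
  shows "poly2_total_degree (coupler_coeff a b g h x y) 6"
  unfolding poly2_total_degree_def
proof (intro conjI allI impI)
  show "coupler_coeff a b g h x y i j = 0" if "6 < i + j" for i j
    using that by (auto simp: coupler_coeff_def)
  show "\<exists>i j. i + j = 6 \<and> coupler_coeff a b g h x y i j \<noteq> 0"
    using assms by (intro exI[of _ 6] exI[of _ 0]) (simp add: coupler_coeff_def)
qed

theorem mainTheorem7:
  fixes a b g h x y :: real
  assumes "a > 0" "b > 0" "g > 0" "h > 0"
  shows "\<exists>c :: nat \<Rightarrow> nat \<Rightarrow> real. poly2_total_degree c 6 \<and>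
    (\<forall>\<theta> \<psi> \<alpha>.
       fut_spacelike (vsub (pB g b \<psi>) (pA a \<theta>)) \<and>
       lor (vsub (pB g b \<psi>) (pA a \<theta>)) (vsub (pB g b \<psi>) (pA a \<theta>)) = h ^ 2 \<and>
       vsub (pB g b \<psi>) (pA a \<theta>) = (h * cosh \<alpha>, h * sinh \<alpha>)
       \<longrightarrow> poly2_eval 6 c (fst (coupler_pt a \<theta> \<alpha> x y)) (snd (coupler_pt a \<theta> \<alpha> x y)) = 0)"
proof (intro exI[of _ "coupler_coeff a b g h x y"] conjI allI impI)
  show "poly2_total_degree (coupler_coeff a b g h x y) 6"
    using assms(4) by (simp add: poly2_total_degree_coupler_coeff)
next
  fix \<theta> \<psi> \<alpha>
  assume "fut_spacelike (vsub (pB g b \<psi>) (pA a \<theta>)) \<and>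
       lor (vsub (pB g b \<psi>) (pA a \<theta>)) (vsub (pB g b \<psi>) (pA a \<theta>)) = h ^ 2 \<and>
       vsub (pB g b \<psi>) (pA a \<theta>) = (h * cosh \<alpha>, h * sinh \<alpha>)"
  then have "coupler_poly a b g h x y (fst (coupler_pt a \<theta> \<alpha> x y)) (snd (coupler_pt a \<theta> \<alpha> x y)) = 0"
    by (blast intro: coupler_poly_coupler_pt_eq_0)
  then show "poly2_eval 6 (coupler_coeff a b g h x y)
      (fst (coupler_pt a \<theta> \<alpha> x y)) (snd (coupler_pt a \<theta> \<alpha> x y)) = 0"
    by (simp add: poly2_eval_coupler_coeff)
qed

end
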